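(* Consider the Markov jump linear system $x_{t+1}=A_{\theta_t}x_t+B_{\theta_t}u_t$, $y_t=C_{\theta_t}x_t$ with modes in $W=\{1,\dots,n_\theta\}$. Let $N\in\mathbb{N}_+$ and $\alpha,\omega\in\mathbb{N}$ with $\alpha+\omega<N$. If the system is $(N,\alpha,\omega)$-mode observable, then it is also $(N+1,\alpha,\omega)$-mode observable.
   Context: Here $A_i\in\mathbb{R}^{n_x\times n_x}$, $B_i\in\mathbb{R}^{n_x\times n_u}$, $C_i\in\mathbb{R}^{n_y\times n_x}$ for $i\in W$. For $\theta=(\theta_0,\dots,\theta_T)\in W^{T+1}$, $x\in\mathbb{R}^{n_x}$ and $u=(u_0,\dots,u_{T-1})\in\mathbb{R}^{Tn_u}$, let $Y(\theta,x,u)=(C_{\theta_0}x_0,\dots,C_{\theta_T}x_T)$ with $x_0=x$, $x_{k+1}=A_{\theta_k}x_k+B_{\theta_k}u_k$. Two paths $\theta,\theta'\in W^{T+1}$ are discernible with respect to a control sequence $u\in\mathbb{R}^{Tn_u}$ if $Y(\theta,x,u)\neq Y(\theta',x',u)$ for all $x,x'\in\mathbb{R}^{n_x}$. For $N\in\mathbb{N}_+$ and $\alpha,\omega\in\mathbb{N}$ with $\alpha+\omega<N$, the system is called $(N,\alpha,\omega)$-mode observable if for all paths $\theta,\theta'\in W^{N+1}$ with $(\theta_\alpha,\dots,\theta_{N-\omega})\neq(\theta'_\alpha,\dots,\theta'_{N-\omega})$, the paths $\theta$ and $\theta'$ are discernible with respect to almost every control sequence $u\in\mathbb{R}^{Nn_u}$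 (i.e., all $u$ outside a set of Lebesgue measure zero). *)

theory Defs
  imports "HOL-Analysis.Analysis"
begin

text \<open>A mode path is a function nat => 'w (only indices 0..T matter),
  a control sequence is a function nat => real^'nu (only indices < T matter).\<close>

fun mjls_state ::
  "('w \<Rightarrow> real^'nx^'nx) \<Rightarrow> ('w \<Rightarrow> real^'nu^'nx) \<Rightarrow>
   (nat \<Rightarrow> 'w) \<Rightarrow> real^'nx \<Rightarrow> (nat \<Rightarrow> real^'nu) \<Rightarrow> nat \<Rightarrow> real^'nx" where
  "mjls_state A B \<theta> x u 0 = x"
| "mjls_state A B \<theta> x u (Suc k) =
     A (\<theta> k) *v mjls_state A B \<theta> x u k + B (\<theta> k) *v u k"

definition mjls_output ::
  "('w \<Rightarrow> real^'nx^'nx) \<Rightarrow> ('w \<Rightarrow> real^'nu^'nx) \<Rightarrow> ('w \<Rightarrow> real^'nx^'ny) \<Rightarrow> nat \<Rightarrow>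
   (nat \<Rightarrow> 'w) \<Rightarrow> real^'nx \<Rightarrow> (nat \<Rightarrow> real^'nu) \<Rightarrow> nat \<Rightarrow> real^'ny" where
  "mjls_output A B C T \<theta> x u =
     (\<lambda>k. if k \<le> T then C (\<theta> k) *v mjls_state A B \<theta> x u k else 0)"

definition discernible ::
  "('w \<Rightarrow> real^'nx^'nx) \<Rightarrow> ('w \<Rightarrow> real^'nu^'nx) \<Rightarrow> ('w \<Rightarrow> real^'nx^'ny) \<Rightarrow> nat \<Rightarrow>
   (nat \<Rightarrow> 'w) \<Rightarrow> (nat \<Rightarrow> 'w) \<Rightarrow> (nat \<Rightarrow> real^'nu) \<Rightarrow> bool" where
  "discernible A B C T \<theta> \<theta>' u \<longleftrightarrow>
     (\<forall>x x'. mjls_output A B C T \<theta> x u \<noteq> mjls_output A B C T \<theta>' x' u)"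

text \<open>(N,alpha,omega)-mode observability. Lebesgue measure on R^{N n_u} is the product of
  Lebesgue measures on the N copies of R^{n_u}.\<close>
definition mode_observable ::
  "('w \<Rightarrow> real^'nx^'nx) \<Rightarrow> ('w \<Rightarrow> real^'nu^'nx) \<Rightarrow> ('w \<Rightarrow> real^'nx^'ny) \<Rightarrow>
   nat \<Rightarrow> nat \<Rightarrow> nat \<Rightarrow> bool" where
  "mode_observable A B C N \<alpha> \<omega> \<longleftrightarrow>
     (\<forall>\<theta> \<theta>'. (\<exists>k. \<alpha> \<le> k \<and> k \<le> N - \<omega> \<and> \<theta> k \<noteq> \<theta>' k) \<longrightarrow>
        (AE u in PiM {..<N} (\<lambda>_. lborel). discernible A B C N \<theta> \<theta>' u))"

end

theory Submission
  imports Defs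
begin

text \<open>A mode mismatch at a time \<open>k\<close> with \<open>\<alpha> \<le> k \<le> N + 1 - \<omega>\<close> either
  satisfies \<open>k \<le> N - \<omega>\<close>, and then the outputs over the first \<open>N\<close> steps already
  discern the paths, or \<open>k = N + 1 - \<omega> \<ge> \<alpha> + 1\<close>, and then the paths shifted by
  one time step, started from the states \<open>x\<^sub>1\<close>, differ within the window of
  \<open>(N, \<alpha>, \<omega>)\<close>-mode observability and the outputs at times \<open>1, \<dots>, N + 1\<close> discern
  them. In both cases the control sequences of length \<open>N + 1\<close> for which this fails
  are the preimage of a Lebesgue null set of sequences of length \<open>N\<close> under a
  reindexed restriction, hence null.\<close>

lemma (in product_sigma_finite) prod_emb_null_sets:
  assumes K: "finite K" "J \<subseteq> K" and S: "S \<in> null_sets (PiM J M)"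
  shows "prod_emb K M J S \<in> null_sets (PiM K M)"
proof -
  have split: "J \<union> (K - J) = K" and fin: "finite J" "finite (K - J)"
    using K finite_subset by auto
  have sets: "prod_emb K M J S \<in> sets (PiM K M)"
    using K(2) null_setsD2[OF S] by (rule measurable_prod_emb)
  have "AE x in PiM J M.
      emeasure (PiM (K - J) M) ((\<lambda>y. merge J (K - J) (x, y)) -` prod_emb K M J S \<inter> space (PiM (K - J) M)) = 0"
    using AE_not_in[OF S] AE_space
  proof eventually_elim
    \<comment> \<open>the section of the cylinder over \<open>x \<notin> S\<close> is empty, so Tonelli gives measure \<open>0\<close>\<close>
    case (elim x)
    then have "(\<lambda>y. merge J (K - J) (x, y)) -` prod_emb K M J S = {}"
      by (auto simp: prod_emb_def space_PiM PiE_def extensional_restrict)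
    then show ?case by simp
  qed
  then have "emeasure (PiM K M) (prod_emb K M J S) = 0"
    by (simp add: emeasure_fold_integral[OF _ fin, unfolded split, OF _ sets] nn_integral_cong_AE)
  with sets show ?thesis by (simp add: null_sets_def)
qed

lemma (in product_sigma_finite) AE_PiM_restrict:
  assumes "finite K" "J \<subseteq> K" and "AE x in PiM J M. P x"
  shows "AE x in PiM K M. P (restrict x J)"
proof -
  from assms(3) obtain S where S: "S \<in> null_sets (PiM J M)" "{x \<in> space (PiM J M). \<not> P x} \<subseteq> S"
    unfolding eventually_ae_filter by blast
  show ?thesis
  proof (rule AE_I')
    show "prod_emb K M J S \<in> null_sets (PiM K M)"
      using assms(1,2) S(1) by (rule prod_emb_null_sets)
    show "{x \<in> space (PiM K M). \<not> P (restrict x J)} \<subseteq> prod_emb K M J S"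
      using S(2) measurable_space[OF measurable_restrict_subset[OF assms(2)]]
      unfolding prod_emb_def space_PiM[symmetric] by auto
  qed
qed

lemma (in product_sigma_finite) distr_PiM_reindex_bij:
  assumes t: "bij_betw t I K" and K: "finite K"
  shows "distr (PiM K M) (PiM I (\<lambda>i. M (t i))) (\<lambda>x. \<lambda>i\<in>I. x (t i)) = PiM I (\<lambda>i. M (t i))"
    (is "distr _ _ ?r = _")
proof -
  interpret Mt: product_sigma_finite "\<lambda>i. M (t i)" by standard
  have I: "finite I" and inj: "inj_on t I" and tI: "t ` I = K"
    using t K bij_betw_finite by (auto simp: bij_betw_def)
  have r: "?r \<in> measurable (PiM K M) (PiM I (\<lambda>i. M (t i)))"
    by (rule measurable_restrict) (use tI in auto)
  let ?s = "the_inv_into I t"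
  have s: "?s k \<in> I" "t (?s k) = k" if "k \<in> K" for k
    using that inj tI the_inv_into_into f_the_inv_into_f by fastforce+
  show ?thesis
  proof (rule Mt.PiM_eqI[OF I])
    fix A assume A: "\<And>i. i \<in> I \<Longrightarrow> A i \<in> sets (M (t i))"
    have "?r -` Pi\<^sub>E I A \<inter> space (PiM K M) = (\<Pi>\<^sub>E k\<in>K. A (?s k))"
    proof (intro set_eqI iffI)
      fix x assume x: "x \<in> ?r -` Pi\<^sub>E I A \<inter> space (PiM K M)"
      then have "x (t i) \<in> A i" if "i \<in> I" for i
        using that by auto
      moreover have "x \<in> extensional K"
        using x by (auto simp: space_PiM PiE_def)
      ultimately show "x \<in> (\<Pi>\<^sub>E k\<in>K. A (?s k))"
        using s by (force simp: PiE_iff)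
    next
      fix x assume x: "x \<in> (\<Pi>\<^sub>E k\<in>K. A (?s k))"
      have "x k \<in> space (M k)" if "k \<in> K" for k
        using x that s[OF that] sets.sets_into_space[OF A[OF s(1)[OF that]]] by auto
      moreover have "x (t i) \<in> A i" if "i \<in> I" for i
        using x that inj tI by (metis PiE_mem imageI the_inv_into_f_f)
      ultimately show "x \<in> ?r -` Pi\<^sub>E I A \<inter> space (PiM K M)"
        using x by (auto simp: space_PiM PiE_iff)
    qed
    then have "distr (PiM K M) (PiM I (\<lambda>i. M (t i))) ?r (Pi\<^sub>E I A) = emeasure (PiM K M) (\<Pi>\<^sub>E k\<in>K. A (?s k))"
      using A by (simp add: emeasure_distr[OF r] sets_PiM_I_finite I)
    also have "\<dots> = (\<Prod>k\<in>K. emeasure (M k) (A (?s k)))"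
      using K by (rule emeasure_PiM) (metis A s)
    also have "\<dots> = (\<Prod>i\<in>I. emeasure (M (t i)) (A i))"
      using inj tI by (subst tI[symmetric], subst prod.reindex) (auto simp: the_inv_into_f_f)
    finally show "distr (PiM K M) (PiM I (\<lambda>i. M (t i))) ?r (Pi\<^sub>E I A) = (\<Prod>i\<in>I. emeasure (M (t i)) (A i))" .
  qed simp
qed

lemma (in product_sigma_finite) AE_PiM_reindex:
  assumes t: "inj_on t I" "t ` I \<subseteq> K" and K: "finite K"
    and P: "AE x in PiM I (\<lambda>i. M (t i)). P x"
  shows "AE x in PiM K M. P (\<lambda>i\<in>I. x (t i))"
proof -
  have "AE x in PiM (t ` I) M. P (\<lambda>i\<in>I. x (t i))"
  proof (rule AE_distrD[where f="\<lambda>x. \<lambda>i\<in>I. x (t i)"])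
    show "(\<lambda>x. \<lambda>i\<in>I. x (t i)) \<in> measurable (PiM (t ` I) M) (PiM I (\<lambda>i. M (t i)))"
      by (rule measurable_restrict) auto
    have "distr (PiM (t ` I) M) (PiM I (\<lambda>i. M (t i))) (\<lambda>x. \<lambda>i\<in>I. x (t i)) = PiM I (\<lambda>i. M (t i))"
      using t K by (intro distr_PiM_reindex_bij) (auto simp: bij_betw_def intro: finite_subset)
    then show "AE x in distr (PiM (t ` I) M) (PiM I (\<lambda>i. M (t i))) (\<lambda>x. \<lambda>i\<in>I. x (t i)). P x"
      using P by (simp only:)
  qed
  from AE_PiM_restrict[OF K t(2) this] show ?thesis
    by (simp cong: restrict_cong)
qed

lemma mjls_state_cong:
  "(\<And>j. j < k \<Longrightarrow> u j = v j) \<Longrightarrow> mjls_state A B \<theta> x u k = mjls_state A B \<theta> x v k"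
  by (induction k) auto

lemma mjls_output_cong:
  assumes "\<And>j. j < T \<Longrightarrow> u j = v j"
  shows "mjls_output A B C T \<theta> x u = mjls_output A B C T \<theta> x v"
proof -
  have "mjls_state A B \<theta> x u k = mjls_state A B \<theta> x v k" if "k \<le> T" for k
    using assms that by (intro mjls_state_cong) auto
  then show ?thesis
    by (simp add: mjls_output_def fun_eq_iff)
qed

lemma discernible_cong:
  assumes "\<And>j. j < T \<Longrightarrow> u j = v j"
  shows "discernible A B C T \<theta> \<theta>' u \<longleftrightarrow> discernible A B C T \<theta> \<theta>' v"
proof -
  have "mjls_output A B C T \<phi> x u = mjls_output A B C T \<phi> x v" for \<phi> x
    using assms by (rule mjls_output_cong)
  then show ?thesis
    unfolding discernible_def by simp
qed

lemma mjls_output_truncate: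
  "N \<le> M \<Longrightarrow> mjls_output A B C N \<theta> x u = (\<lambda>k. if k \<le> N then mjls_output A B C M \<theta> x u k else 0)"
  by (auto simp: mjls_output_def fun_eq_iff)

lemma discernible_mono:
  assumes "discernible A B C N \<theta> \<theta>' u" and "N \<le> M"
  shows "discernible A B C M \<theta> \<theta>' u"
  unfolding discernible_def
proof (intro allI notI)
  fix x x' assume eq: "mjls_output A B C M \<theta> x u = mjls_output A B C M \<theta>' x' u"
  have "mjls_output A B C N \<theta> x u = mjls_output A B C N \<theta>' x' u"
    unfolding mjls_output_truncate[OF assms(2)] eq ..
  with assms(1) show False
    unfolding discernible_def by blast
qed

lemma mjls_state_shift:
  "mjls_state A B (\<lambda>n. \<theta> (Suc n)) (mjls_state A B \<theta> x u (Suc 0)) (\<lambda>n. u (Suc n)) k =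
   mjls_state A B \<theta> x u (Suc k)"
  by (induction k) auto

lemma mjls_output_shift:
  "mjls_output A B C N (\<lambda>n. \<theta> (Suc n)) (mjls_state A B \<theta> x u (Suc 0)) (\<lambda>n. u (Suc n)) =
   (\<lambda>k. if k \<le> N then mjls_output A B C (Suc N) \<theta> x u (Suc k) else 0)"
  by (auto simp: mjls_output_def fun_eq_iff mjls_state_shift simp del: mjls_state.simps)

lemma discernible_of_shift:
  assumes "discernible A B C N (\<lambda>n. \<theta> (Suc n)) (\<lambda>n. \<theta>' (Suc n)) (\<lambda>n. u (Suc n))"
  shows "discernible A B C (Suc N) \<theta> \<theta>' u"
  unfolding discernible_def
proof (intro allI notI)
  fix x x' assume eq: "mjls_output A B C (Suc N) \<theta> x u = mjls_output A B C (Suc N) \<theta>' x' u"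
  have "mjls_output A B C N (\<lambda>n. \<theta> (Suc n)) (mjls_state A B \<theta> x u (Suc 0)) (\<lambda>n. u (Suc n)) =
      mjls_output A B C N (\<lambda>n. \<theta>' (Suc n)) (mjls_state A B \<theta>' x' u (Suc 0)) (\<lambda>n. u (Suc n))"
    unfolding mjls_output_shift eq ..
  with assms show False
    unfolding discernible_def by blast
qed

lemma product_sigma_finite_lborel: "product_sigma_finite (\<lambda>_. lborel :: 'a::euclidean_space measure)"
  by (simp add: product_sigma_finite_def lborel.sigma_finite_measure_axioms)

lemma AE_discernible_Suc_of_prefix:
  assumes "AE v in PiM {..<N} (\<lambda>_. lborel). discernible A B C N \<theta> \<theta>' v"
  shows "AE u in PiM {..<Suc N} (\<lambda>_. lborel). discernible A B C (Suc N) \<theta> \<theta>' u"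
proof -
  have "AE u in PiM {..<Suc N} (\<lambda>_. lborel). discernible A B C N \<theta> \<theta>' (restrict u {..<N})"
    using assms by (intro product_sigma_finite.AE_PiM_restrict[OF product_sigma_finite_lborel]) auto
  then show ?thesis
  proof eventually_elim
    case (elim u)
    have "discernible A B C N \<theta> \<theta>' (restrict u {..<N}) \<longleftrightarrow> discernible A B C N \<theta> \<theta>' u"
      by (rule discernible_cong) simp
    with elim have "discernible A B C N \<theta> \<theta>' u"
      by blast
    then show ?case
      by (rule discernible_mono) simp
  qed
qed

lemma AE_discernible_Suc_of_shift:
  assumes "AE v in PiM {..<N} (\<lambda>_. lborel).
    discernible A B C N (\<lambda>n. \<theta> (Suc n)) (\<lambda>n. \<theta>' (Suc n)) v"
  shows "AE u in PiM {..<Suc N} (\<lambda>_. lborel). discernible A B C (Suc N) \<theta> \<theta>' u"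
proof -
  have "AE u in PiM {..<Suc N} (\<lambda>_. lborel).
      discernible A B C N (\<lambda>n. \<theta> (Suc n)) (\<lambda>n. \<theta>' (Suc n)) (\<lambda>n\<in>{..<N}. u (Suc n))"
    using assms by (intro product_sigma_finite.AE_PiM_reindex[OF product_sigma_finite_lborel]) auto
  then show ?thesis
  proof eventually_elim
    case (elim u)
    have "discernible A B C N (\<lambda>n. \<theta> (Suc n)) (\<lambda>n. \<theta>' (Suc n)) (\<lambda>n\<in>{..<N}. u (Suc n)) \<longleftrightarrow>
        discernible A B C N (\<lambda>n. \<theta> (Suc n)) (\<lambda>n. \<theta>' (Suc n)) (\<lambda>n. u (Suc n))"
      by (rule discernible_cong) simp
    with elim have "discernible A B C N (\<lambda>n. \<theta> (Suc n)) (\<lambda>n. \<theta>' (Suc n)) (\<lambda>n. u (Suc n))"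
      by blast
    then show ?case
      by (rule discernible_of_shift)
  qed
qed

theorem lemma3:
  fixes A :: "'w::finite \<Rightarrow> real^'nx^'nx"
    and B :: "'w \<Rightarrow> real^'nu^'nx"
    and C :: "'w \<Rightarrow> real^'nx^'ny"
    and N \<alpha> \<omega> :: nat
  assumes "0 < N" and "\<alpha> + \<omega> < N"
    and "mode_observable A B C N \<alpha> \<omega>"
  shows "mode_observable A B C (N + 1) \<alpha> \<omega>"
  unfolding mode_observable_def Suc_eq_plus1[symmetric]
proof (intro allI impI)
  fix \<theta> \<theta>' :: "nat \<Rightarrow> 'w"
  assume "\<exists>k. \<alpha> \<le> k \<and> k \<le> Suc N - \<omega> \<and> \<theta> k \<noteq> \<theta>' k"
  then obtain k where k: "\<alpha> \<le> k" "k \<le> Suc N - \<omega>" "\<theta> k \<noteq> \<theta>' k"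
    by blast
  have observable: "AE v in PiM {..<N} (\<lambda>_. lborel). discernible A B C N \<phi> \<phi>' v"
    if "\<alpha> \<le> j" "j \<le> N - \<omega>" "\<phi> j \<noteq> \<phi>' j" for j and \<phi> \<phi>' :: "nat \<Rightarrow> 'w"
    using assms(3) that unfolding mode_observable_def by blast
  show "AE u in PiM {..<Suc N} (\<lambda>_. lborel). discernible A B C (Suc N) \<theta> \<theta>' u"
  proof (cases "k \<le> N - \<omega>")
    case True
    with k have "AE v in PiM {..<N} (\<lambda>_. lborel). discernible A B C N \<theta> \<theta>' v"
      by (intro observable)
    then show ?thesis
      by (rule AE_discernible_Suc_of_prefix)
  next
    case False
    then have j: "\<alpha> \<le> k - 1" "k - 1 \<le> N - \<omega>" and "Suc (k - 1) = k"
      using k(2) assms(2) by linarith+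
    with k(3) have "AE v in PiM {..<N} (\<lambda>_. lborel).
        discernible A B C N (\<lambda>n. \<theta> (Suc n)) (\<lambda>n. \<theta>' (Suc n)) v"
      by (intro observable[OF j]) simp
    then show ?thesis
      by (rule AE_discernible_Suc_of_shift)
  qed
qed

end
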